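(* For every non-empty open set $U$ of $\mathcal{K}_2$ there exists $N\ge3$ such that $\mathcal{B}_2^\phi(j)\cap U\neq\emptyset$ for all $j\ge N$. In particular, $\mathcal{B}_2^\phi=\bigcup_{j\ge3}\mathcal{B}_2^\phi(j)$ is dense in $\mathcal{K}_2$.
   Context: $\mathcal{K}_2$ is the set of centrally symmetric convex bodies in $\mathbb{R}^2$ (compact convex sets with non-empty interior, symmetric about the origin) with the Hausdorff metric. For a spanning set $a=\{a_1,\dots,a_n\}\subset\mathbb{R}^2$ with $n\ge3$ and $w>\log 2n$ (natural log), let $\phi_{a,w}(x)=\frac{1}{2n}\sum_{i=1}^n\left(e^{w(a_i\cdot x-1)}+e^{w(-a_i\cdot x-1)}\right)$. For $j\ge3$, $\mathcal{B}_2^\phi(j)$ is the set of $C\subset\mathbb{R}^2$ for which there exist a spanning set $a=\{a_1,\dots,a_j\}\subset\mathbb{R}^2$ and $w>\log2j$ with $C=\{x\in\mathbb{R}^2:\phi_{a,w}(x)\le1\}$. *)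

theory Defs
  imports "HOL-Analysis.Analysis"
begin

definition K2 :: "(real^2) set set" where
  "K2 = {C. compact C \<and> convex C \<and> interior C \<noteq> {} \<and> (\<forall>x\<in>C. - x \<in> C)}"

text \<open>Hausdorff distance (used only between non-empty compact sets).\<close>
definition hausdist :: "(real^2) set \<Rightarrow> (real^2) set \<Rightarrow> real" where
  "hausdist C D = max (SUP x\<in>C. infdist x D) (SUP y\<in>D. infdist y C)"

definition openK2 :: "(real^2) set set \<Rightarrow> bool" where
  "openK2 U \<longleftrightarrow> U \<subseteq> K2 \<and>
     (\<forall>C\<in>U. \<exists>e>0. \<forall>D\<in>K2. hausdist C D < e \<longrightarrow> D \<in> U)"

definition phi :: "(real^2) set \<Rightarrow> real \<Rightarrow> real^2 \<Rightarrow> real" where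
  "phi A w x = (1 / (2 * real (card A))) *
     (\<Sum>a\<in>A. exp (w * (a \<bullet> x - 1)) + exp (w * (- (a \<bullet> x) - 1)))"

definition Bphi :: "nat \<Rightarrow> (real^2) set set" where
  "Bphi j = {C. \<exists>A w. finite A \<and> card A = j \<and> span A = UNIV \<and>
                 w > ln (2 * real j) \<and> C = {x. phi A w x \<le> 1}}"

end

theory Submission
  imports Defs
begin

text \<open>Every exponential term of \<open>phi A w\<close> is bounded by the whole sum, so on the sublevel set
  \<open>{phi A w \<le> 1}\<close> each \<open>a \<in> A\<close> satisfies \<open>a \<bullet> x \<le> 1 + ln (2 card A) / w\<close>, while every \<open>x\<close> with
  \<open>|a \<bullet> x| \<le> 1\<close> for all \<open>a \<in> A\<close> lies in it. Take for \<open>A\<close> an \<open>\<eta> / (2 R)\<close>-net of the polar body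
  of \<open>C \<subseteq> cball 0 R\<close>, containing a basis and padded by further polar points to any prescribed
  size \<open>j\<close>, and \<open>w = ln (2 j) / \<eta>\<close>. The bipolar theorem then squeezes the sublevel set between \<open>C\<close>
  and \<open>(1 + \<eta>)\<^sup>2 C\<close>, so it is Hausdorff-close to \<open>C\<close>.\<close>

lemma convex_on_sum_family:
  assumes "convex S" and "\<And>i. i \<in> I \<Longrightarrow> convex_on S (f i)"
  shows "convex_on S (\<lambda>x. \<Sum>i\<in>I. f i x)"
  using assms(2)
proof (induction I rule: infinite_finite_induct)
  case (insert i I)
  then show ?case by (simp add: convex_on_add)
qed (simp_all add: convex_on_const assms(1))

lemma convex_on_compose_inner_affine:
  fixes g :: "real \<Rightarrow> real"
  assumes "convex_on UNIV g"
  shows "convex_on UNIV (\<lambda>x. g (a \<bullet> x + d))"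
proof
  fix t :: real and x y :: 'a
  assume "0 < t" "t < 1"
  moreover have "a \<bullet> ((1 - t) *\<^sub>R x + t *\<^sub>R y) + d = (1 - t) * (a \<bullet> x + d) + t * (a \<bullet> y + d)"
    by (simp add: inner_add_right algebra_simps)
  ultimately show "g (a \<bullet> ((1 - t) *\<^sub>R x + t *\<^sub>R y) + d)
                    \<le> (1 - t) * g (a \<bullet> x + d) + t * g (a \<bullet> y + d)"
    using convex_onD[OF assms, of t "a \<bullet> x + d" "a \<bullet> y + d"] by simp
qed simp

lemma convex_sublevel:
  assumes "convex_on S f"
  shows "convex {x \<in> S. f x \<le> c}"
proof (rule convexI)
  fix x y and u v :: real
  assume xy: "x \<in> {x \<in> S. f x \<le> c}" "y \<in> {x \<in> S. f x \<le> c}" and uv: "0 \<le> u" "0 \<le> v" "u + v = 1"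
  have "f (u *\<^sub>R x + v *\<^sub>R y) \<le> u * f x + v * f y"
    using assms xy uv unfolding convex_on_def by blast
  also have "\<dots> \<le> u * c + v * c"
    using xy uv by (intro add_mono mult_left_mono) auto
  finally show "u *\<^sub>R x + v *\<^sub>R y \<in> {x \<in> S. f x \<le> c}"
    using assms xy uv convex_on_imp_convex[OF assms] by (auto simp: convex_def distrib_right[symmetric])
qed

lemma convex_on_phi: "convex_on UNIV (phi A w)"
proof -
  have "convex_on UNIV (\<lambda>x. exp (w * (s * (a \<bullet> x) - 1)))" for s a
    using convex_on_compose_inner_affine[OF exp_convex, of "(w * s) *\<^sub>R a" "- w"]
    by (simp add: algebra_simps)
  from this[of 1] this[of "-1"]
  have "convex_on UNIV (\<lambda>x. \<Sum>a\<in>A. exp (w * (a \<bullet> x - 1)) + exp (w * (- (a \<bullet> x) - 1)))"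
    by (intro convex_on_sum_family convex_on_add) auto
  then show ?thesis
    unfolding phi_def[abs_def] by (intro convex_on_cmul) auto
qed

lemma convex_phi_sublevel: "convex {x. phi A w x \<le> 1}"
  using convex_sublevel[OF convex_on_phi, of A w 1] by simp

lemma closed_phi_sublevel: "closed {x. phi A w x \<le> 1}"
  unfolding phi_def by (intro closed_Collect_le continuous_intros)

lemma phi_uminus: "phi A w (- x) = phi A w x"
  unfolding phi_def by (simp add: add.commute)

lemma inner_le_if_phi_le_1:
  assumes "finite A" "a \<in> A" "w > 0" "phi A w x \<le> 1"
  shows "a \<bullet> x \<le> 1 + ln (2 * real (card A)) / w"
proof -
  have card: "card A > 0" using assms(1,2) card_gt_0_iff by blast
  have "exp (w * (a \<bullet> x - 1)) \<le> exp (w * (a \<bullet> x - 1)) + exp (w * (- (a \<bullet> x) - 1))" by simp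
  also have "\<dots> \<le> (\<Sum>b\<in>A. exp (w * (b \<bullet> x - 1)) + exp (w * (- (b \<bullet> x) - 1)))"
    using assms(1,2) by (intro member_le_sum) (auto intro: add_nonneg_nonneg)
  also have "\<dots> \<le> 2 * real (card A)"
    using assms(4) card unfolding phi_def by (simp add: field_simps)
  finally have "w * (a \<bullet> x - 1) \<le> ln (2 * real (card A))"
    using card by (simp add: ln_ge_iff)
  then show ?thesis
    using assms(3) by (simp add: field_simps)
qed

lemma phi_le_1_if_abs_inner_le_1:
  assumes "finite A" "A \<noteq> {}" "w \<ge> 0" "\<forall>a\<in>A. \<bar>a \<bullet> x\<bar> \<le> 1"
  shows "phi A w x \<le> 1"
proof -
  have "(\<Sum>a\<in>A. exp (w * (a \<bullet> x - 1)) + exp (w * (- (a \<bullet> x) - 1))) \<le> (\<Sum>a\<in>A. 2)"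
  proof (rule sum_mono)
    fix a assume "a \<in> A"
    then have "w * (a \<bullet> x - 1) \<le> 0" "w * (- (a \<bullet> x) - 1) \<le> 0"
      using assms(3,4) by (auto intro!: mult_nonneg_nonpos)
    then show "exp (w * (a \<bullet> x - 1)) + exp (w * (- (a \<bullet> x) - 1)) \<le> 2"
      by (smt (verit) exp_le_one_iff)
  qed
  moreover have "card A > 0"
    using assms(1,2) card_gt_0_iff by blast
  ultimately show ?thesis
    unfolding phi_def by (simp add: field_simps)
qed

definition polar :: "'a::real_inner set \<Rightarrow> 'a set" where
  "polar C = {b. \<forall>y\<in>C. b \<bullet> y \<le> 1}"

lemma zero_in_polar [simp]: "0 \<in> polar C"
  by (simp add: polar_def)

lemma closed_polar: "closed (polar C)"
proof -
  have "polar C = (\<Inter>y\<in>C. {b. y \<bullet> b \<le> 1})"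
    by (auto simp: polar_def inner_commute)
  then show ?thesis
    by (simp add: closed_INT closed_halfspace_le)
qed

lemma bounded_polar:
  assumes "r > 0" "ball 0 r \<subseteq> C"
  shows "bounded (polar C)"
proof -
  have "norm b \<le> 2 / r" if "b \<in> polar C" for b
  proof (cases "b = 0")
    case False
    define y where "y = (r / 2 / norm b) *\<^sub>R b"
    have "y \<in> C"
      using False assms unfolding y_def by auto
    then have "b \<bullet> y \<le> 1"
      using that unfolding polar_def by auto
    moreover have "b \<bullet> y = r / 2 * norm b"
      unfolding y_def using False by (simp add: dot_square_norm power2_eq_square)
    ultimately show ?thesis
      using assms(1) by (simp add: field_simps)
  qed (use assms in simp)
  then show ?thesis
    unfolding bounded_iff by blast
qed

lemma cball_subset_polar:
  fixes C :: "'a::real_inner set"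
  assumes "R > 0" "\<forall>y\<in>C. norm y \<le> R"
  shows "cball 0 (1 / R) \<subseteq> polar C"
proof (intro subsetI, unfold polar_def, intro CollectI ballI)
  fix b :: 'a and y assume "b \<in> cball 0 (1 / R)" "y \<in> C"
  then have "norm b * norm y \<le> 1 / R * R"
    using assms by (intro mult_mono) auto
  then show "b \<bullet> y \<le> 1"
    using assms(1) norm_cauchy_schwarz[of b y] by simp
qed

lemma mem_if_inner_polar_le_1:
  fixes C :: "'a::euclidean_space set"
  assumes "closed C" "convex C" "0 \<in> C" "\<forall>b\<in>polar C. b \<bullet> x \<le> 1"
  shows "x \<in> C"
proof (rule ccontr)
  assume "x \<notin> C"
  then obtain a \<beta> where a: "a \<bullet> x < \<beta>" "\<forall>y\<in>C. \<beta> < a \<bullet> y"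
    using separating_hyperplane_closed_point[OF assms(2,1)] by blast
  have \<beta>: "\<beta> < 0"
    using a(2) assms(3) by auto
  have "(a /\<^sub>R \<beta>) \<bullet> y \<le> 1" if "y \<in> C" for y
    using a(2) that \<beta> by (auto simp: field_simps)
  then have "(a /\<^sub>R \<beta>) \<bullet> x \<le> 1"
    using assms(4) unfolding polar_def by blast
  with a(1) \<beta> show False
    by (auto simp: field_simps)
qed

lemma symmetric_convex_contains_ball:
  fixes C :: "'a::real_normed_vector set"
  assumes "convex C" "\<forall>x\<in>C. - x \<in> C" "interior C \<noteq> {}"
  obtains r where "r > 0" "ball 0 r \<subseteq> C"
proof -
  obtain x r where r: "r > 0" "ball x r \<subseteq> C"
    using assms(3) mem_interior by blast
  have "z \<in> C" if "z \<in> ball 0 r" for z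
  proof -
    have "x + z \<in> C" "x - z \<in> C"
      using r that by (auto simp: dist_norm)
    then have "x + z \<in> C" "- (x - z) \<in> C"
      using assms(2) by auto
    then have "(1/2) *\<^sub>R (x + z) + (1/2) *\<^sub>R (- (x - z)) \<in> C"
      by (intro convexD[OF assms(1)]) auto
    then show "z \<in> C"
      by (simp add: algebra_simps flip: scaleR_2)
  qed
  then show ?thesis
    using r(1) that by blast
qed

lemma finite_subset_extend_card:
  assumes "finite F" "F \<subseteq> S" "infinite S" "card F \<le> j"
  obtains A where "F \<subseteq> A" "A \<subseteq> S" "finite A" "card A = j"
proof -
  obtain B where B: "finite B" "card B = j - card F" "B \<subseteq> S - F"
    using infinite_arbitrarily_large[of "S - F"] assms(1,3) by (meson finite_Diff2)
  have "card (F \<union> B) = j"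
    using B assms(1,4) by (subst card_Un_disjoint) auto
  then show ?thesis
    using that B assms(1,2) by blast
qed

lemma spanning_nets_of_every_large_size:
  fixes S :: "'a::euclidean_space set"
  assumes "compact S" "\<rho> > 0" "cball 0 \<rho> \<subseteq> S" "\<delta> > 0"
  obtains N where "\<And>j. j \<ge> N \<Longrightarrow> \<exists>A. A \<subseteq> S \<and> finite A \<and> card A = j \<and> span A = UNIV \<and>
                                     (\<forall>b\<in>S. \<exists>a\<in>A. dist b a < \<delta>)"
proof -
  obtain F where F: "F \<subseteq> S" "finite F" "S \<subseteq> (\<Union>a\<in>F. ball a \<delta>)"
    using compactE_image[OF assms(1), of S "\<lambda>a. ball a \<delta>"] assms(4) by force
  define G where "G = F \<union> (\<lambda>i. \<rho> *\<^sub>R i) ` Basis"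
  have G: "finite G" "G \<subseteq> S"
    using F assms(2,3) unfolding G_def by auto
  have "Basis \<subseteq> span G"
  proof
    fix i :: 'a assume "i \<in> Basis"
    then have "(1 / \<rho>) *\<^sub>R (\<rho> *\<^sub>R i) \<in> span G"
      unfolding G_def by (intro span_mul span_base) auto
    then show "i \<in> span G"
      using assms(2) by simp
  qed
  then have span_G: "span G = UNIV"
    by (metis span_Basis span_mono span_span top.extremum_unique)
  have "infinite S"
    using uncountable_cball[OF assms(2), of 0] assms(3) countable_finite countable_subset by blast
  show ?thesis
  proof (rule that)
    fix j assume "card G \<le> j"
    then obtain A where "G \<subseteq> A" "A \<subseteq> S" "finite A" "card A = j"
      using finite_subset_extend_card[OF G \<open>infinite S\<close>] by blast
    moreover have "span A = UNIV"
      using span_G span_mono[OF \<open>G \<subseteq> A\<close>] by auto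
    moreover have "\<forall>b\<in>S. \<exists>a\<in>A. dist b a < \<delta>"
      using F(3) \<open>G \<subseteq> A\<close> unfolding G_def by (fastforce simp: dist_commute)
    ultimately show "\<exists>A. A \<subseteq> S \<and> finite A \<and> card A = j \<and> span A = UNIV \<and>
                         (\<forall>b\<in>S. \<exists>a\<in>A. dist b a < \<delta>)"
      by blast
  qed
qed

lemma hausdist_le_if_subset_scaled:
  assumes "C \<noteq> {}" "C \<subseteq> D" "\<forall>y\<in>C. norm y \<le> R" "t \<ge> 1" "\<forall>x\<in>D. x /\<^sub>R t \<in> C"
  shows "hausdist C D \<le> (t - 1) * R"
proof -
  have R: "R \<ge> 0"
    using assms(1,3) norm_ge_zero order_trans by blast
  have "infdist x C \<le> (t - 1) * R" if "x \<in> D" for x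
  proof -
    have "infdist x C \<le> dist x (x /\<^sub>R t)"
      using assms(5) that by (intro infdist_le) auto
    also have "dist x (x /\<^sub>R t) = (t - 1) * norm (x /\<^sub>R t)"
    proof -
      have "x - x /\<^sub>R t = (t - 1) *\<^sub>R (x /\<^sub>R t)"
        using assms(4) by (simp add: algebra_simps)
      then show ?thesis
        using assms(4) by (simp add: dist_norm)
    qed
    also have "\<dots> \<le> (t - 1) * R"
      using assms(3-5) that by (intro mult_left_mono) (auto simp del: norm_scaleR)
    finally show ?thesis .
  qed
  moreover have "infdist x D = 0" if "x \<in> C" for x
    using assms(2) that by (simp add: infdist_zero subsetD)
  ultimately show ?thesis
    unfolding hausdist_def using assms(1,2,4) R
    by (intro max.boundedI cSUP_least) (auto simp: subset_empty)
qed

lemma inner_polar_le_if_inner_net_le: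
  fixes C :: "'a::real_inner set"
  assumes R: "R > 0" "\<forall>y\<in>C. norm y \<le> R"
    and net: "\<forall>b\<in>polar C. \<exists>a\<in>A. dist b a < \<delta>" and \<delta>: "0 \<le> \<delta>" "\<delta> \<le> 1 / (2 * R)"
    and x: "\<forall>a\<in>A. a \<bullet> x \<le> s"
    and b: "b \<in> polar C"
  shows "b \<bullet> x \<le> s * (1 + 2 * R * \<delta>)"
proof -
  have near: "c \<bullet> x \<le> s + \<delta> * norm x" if c: "c \<in> polar C" for c
  proof -
    obtain a where a: "a \<in> A" "dist c a < \<delta>"
      using net c by blast
    have "(c - a) \<bullet> x \<le> norm (c - a) * norm x"
      by (rule norm_cauchy_schwarz)
    also have "\<dots> \<le> \<delta> * norm x"
      using a(2) by (intro mult_right_mono) (auto simp: dist_norm)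
    finally have "c \<bullet> x \<le> a \<bullet> x + \<delta> * norm x"
      by (simp add: inner_diff_left)
    then show ?thesis
      using x a(1) by fastforce
  qed
  have "norm x \<le> 2 * R * s"
  proof (cases "x = 0")
    case True
    then have "s \<ge> 0"
      using near[of 0] by simp
    then show ?thesis
      using True R(1) by simp
  next
    case False
    have "norm (x /\<^sub>R (R * norm x)) = 1 / R"
      using False R(1) by (simp add: field_simps)
    then have "x /\<^sub>R (R * norm x) \<in> polar C"
      using cball_subset_polar[OF R] by auto
    moreover have "(x /\<^sub>R (R * norm x)) \<bullet> x = norm x / R"
      using False R(1) by (simp add: dot_square_norm power2_eq_square field_simps)
    ultimately have "norm x / R \<le> s + \<delta> * norm x"
      using near by metis
    moreover have "\<delta> * norm x \<le> norm x / (2 * R)"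
      using mult_right_mono[OF \<delta>(2) norm_ge_zero[of x]] by simp
    ultimately show ?thesis
      using R(1) by (simp add: field_simps)
  qed
  then have "\<delta> * norm x \<le> \<delta> * (2 * R * s)"
    using \<delta>(1) by (rule mult_left_mono)
  then show ?thesis
    using near[OF b] by (simp add: algebra_simps)
qed

lemma phi_sublevel_squeezed:
  fixes C :: "(real^2) set"
  assumes C: "closed C" "convex C" "0 \<in> C" "\<forall>x\<in>C. - x \<in> C"
    and R: "R > 0" "\<forall>y\<in>C. norm y \<le> R"
    and A: "finite A" "A \<noteq> {}" "A \<subseteq> polar C" "\<forall>b\<in>polar C. \<exists>a\<in>A. dist b a < \<delta>"
    and \<delta>: "0 \<le> \<delta>" "\<delta> \<le> 1 / (2 * R)"
    and w: "w > 0"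
  defines "t \<equiv> (1 + ln (2 * real (card A)) / w) * (1 + 2 * R * \<delta>)"
  shows "C \<subseteq> {x. phi A w x \<le> 1}" and "\<forall>x\<in>{x. phi A w x \<le> 1}. x /\<^sub>R t \<in> C"
proof -
  show "C \<subseteq> {x. phi A w x \<le> 1}"
  proof
    fix x assume x: "x \<in> C"
    have "\<bar>a \<bullet> x\<bar> \<le> 1" if "a \<in> A" for a
    proof -
      have "a \<bullet> x \<le> 1" "a \<bullet> (- x) \<le> 1"
        using that A(3) x C(4) unfolding polar_def by blast+
      then show ?thesis
        by simp
    qed
    then show "x \<in> {x. phi A w x \<le> 1}"
      using phi_le_1_if_abs_inner_le_1[OF A(1,2)] w by auto
  qed
  have "card A > 0"
    using A(1,2) card_gt_0_iff by blast
  then have "t > 0"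
    unfolding t_def using w R(1) \<delta>(1) by (intro mult_pos_pos add_pos_nonneg) auto
  show "\<forall>x\<in>{x. phi A w x \<le> 1}. x /\<^sub>R t \<in> C"
  proof
    fix x assume "x \<in> {x. phi A w x \<le> 1}"
    then have "\<forall>a\<in>A. a \<bullet> x \<le> 1 + ln (2 * real (card A)) / w"
      using inner_le_if_phi_le_1[OF A(1) _ w] by auto
    then have "b \<bullet> x \<le> t" if "b \<in> polar C" for b
      unfolding t_def using inner_polar_le_if_inner_net_le[OF R A(4) \<delta>] that by blast
    then have "b \<bullet> (x /\<^sub>R t) \<le> 1" if "b \<in> polar C" for b
      using \<open>t > 0\<close> that by (simp add: divide_inverse_commute[symmetric] pos_divide_le_eq)
    then show "x /\<^sub>R t \<in> C"
      by (intro mem_if_inner_polar_le_1[OF C(1-3)]) blast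
  qed
qed

lemma mem_K2_if_squeezed:
  assumes "C \<in> K2" "C \<subseteq> D" "closed D" "convex D" "\<forall>x\<in>D. - x \<in> D"
    and "t > 0" "\<forall>x\<in>D. x /\<^sub>R t \<in> C"
  shows "D \<in> K2"
proof -
  have "D \<subseteq> (\<lambda>c. t *\<^sub>R c) ` C"
  proof
    fix x assume "x \<in> D"
    then have "x = t *\<^sub>R (x /\<^sub>R t)" "x /\<^sub>R t \<in> C"
      using assms(6,7) by auto
    then show "x \<in> (\<lambda>c. t *\<^sub>R c) ` C"
      by blast
  qed
  moreover have "bounded ((\<lambda>c. t *\<^sub>R c) ` C)"
    using assms(1) unfolding K2_def by (intro bounded_scaling compact_imp_bounded) auto
  ultimately have "compact D"
    using assms(3) bounded_subset compact_eq_bounded_closed by blast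
  moreover have "interior D \<noteq> {}"
    using assms(1,2) interior_mono unfolding K2_def by blast
  ultimately show ?thesis
    using assms(4,5) unfolding K2_def by blast
qed

lemma Bphi_K2_near_of_polar_net:
  assumes "C \<in> K2" and R: "R > 0" "\<forall>y\<in>C. norm y \<le> R" and \<eta>: "0 < \<eta>" "\<eta> < 1"
    and A: "A \<subseteq> polar C" "finite A" "card A = j" "j > 0" "span A = UNIV"
      "\<forall>b\<in>polar C. \<exists>a\<in>A. dist b a < \<eta> / (2 * R)"
  shows "\<exists>D\<in>Bphi j \<inter> K2. hausdist C D \<le> 3 * \<eta> * R"
proof -
  have C: "compact C" "convex C" "\<forall>x\<in>C. - x \<in> C" "interior C \<noteq> {}"
    using assms(1) unfolding K2_def by auto
  obtain r where "r > 0" "ball 0 r \<subseteq> C"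
    using symmetric_convex_contains_ball[OF C(2-4)] by blast
  then have "0 \<in> C"
    by auto
  have "A \<noteq> {}"
    using A(3,4) by auto
  have \<delta>: "0 \<le> \<eta> / (2 * R)" "\<eta> / (2 * R) \<le> 1 / (2 * R)"
    using \<eta> R(1) by (simp_all add: divide_right_mono)
  have ln_pos: "ln (2 * real j) > 0"
    using A(4) by simp
  define w where "w = ln (2 * real j) / \<eta>"
  have w: "w > ln (2 * real j)" "w > 0"
    using ln_pos \<eta> unfolding w_def by (auto simp: field_simps)
  define D where "D = {x. phi A w x \<le> 1}"
  define t where "t = (1 + \<eta>) * (1 + \<eta>)"
  have t_eq: "(1 + ln (2 * real (card A)) / w) * (1 + 2 * R * (\<eta> / (2 * R))) = t"
    unfolding t_def w_def A(3) using \<eta>(1) R(1) ln_pos by (simp add: field_simps)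
  note squeeze = phi_sublevel_squeezed[OF compact_imp_closed[OF C(1)] C(2) \<open>0 \<in> C\<close> C(3) R
      A(2) \<open>A \<noteq> {}\<close> A(1,6) \<delta> w(2), unfolded t_eq, folded D_def]
  have t: "t \<ge> 1" "t - 1 \<le> 3 * \<eta>"
    using \<eta> unfolding t_def by (auto simp: algebra_simps)
  have "hausdist C D \<le> (t - 1) * R"
    using squeeze t(1) R(2) \<open>0 \<in> C\<close> by (intro hausdist_le_if_subset_scaled) auto
  also have "\<dots> \<le> 3 * \<eta> * R"
    using t(2) R(1) by (intro mult_right_mono) auto
  finally have "hausdist C D \<le> 3 * \<eta> * R" .
  moreover have "D \<in> K2"
    using squeeze t(1) closed_phi_sublevel convex_phi_sublevel phi_uminus unfolding D_def
    by (intro mem_K2_if_squeezed[OF assms(1)]) auto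
  moreover have "D \<in> Bphi j"
    unfolding Bphi_def D_def using A w(1) by blast
  ultimately show ?thesis
    by blast
qed

lemma K2_near_Bphi:
  assumes "C \<in> K2" "e > 0"
  obtains N where "N \<ge> 3" "\<And>j. j \<ge> N \<Longrightarrow> \<exists>D\<in>Bphi j \<inter> K2. hausdist C D < e"
proof -
  have C: "compact C" "convex C" "\<forall>x\<in>C. - x \<in> C" "interior C \<noteq> {}"
    using assms(1) unfolding K2_def by auto
  obtain r where r: "r > 0" "ball 0 r \<subseteq> C"
    using symmetric_convex_contains_ball[OF C(2-4)] by blast
  obtain R where R: "R > 0" "\<forall>y\<in>C. norm y \<le> R"
    using compact_imp_bounded[OF C(1)] unfolding bounded_pos by blast
  define \<eta> where "\<eta> = min (1 / 2) (e / (4 * R))"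
  have \<eta>: "0 < \<eta>" "\<eta> < 1" "3 * \<eta> * R < e"
    using assms(2) R(1) unfolding \<eta>_def by (auto simp: min_def field_simps)
  have polar_C: "compact (polar C)"
    using closed_polar bounded_polar[OF r] by (simp add: compact_eq_bounded_closed)
  have "1 / R > 0" "\<eta> / (2 * R) > 0"
    using \<eta>(1) R(1) by simp_all
  then obtain N where nets: "\<And>j. j \<ge> N \<Longrightarrow> \<exists>A. A \<subseteq> polar C \<and> finite A \<and> card A = j \<and>
                              span A = UNIV \<and> (\<forall>b\<in>polar C. \<exists>a\<in>A. dist b a < \<eta> / (2 * R))"
    using spanning_nets_of_every_large_size[OF polar_C _ cball_subset_polar[OF R]] by metis
  show ?thesis
  proof (rule that[of "max 3 N"])
    fix j assume j: "max 3 N \<le> j"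
    then have "N \<le> j" "j > 0"
      by simp_all
    then obtain A where "A \<subseteq> polar C" "finite A" "card A = j" "span A = UNIV"
        "\<forall>b\<in>polar C. \<exists>a\<in>A. dist b a < \<eta> / (2 * R)"
      using nets by blast
    then obtain D where "D \<in> Bphi j \<inter> K2" "hausdist C D \<le> 3 * \<eta> * R"
      using Bphi_K2_near_of_polar_net[OF assms(1) R \<eta>(1,2)] \<open>j > 0\<close> by blast
    then show "\<exists>D\<in>Bphi j \<inter> K2. hausdist C D < e"
      using \<eta>(3) by force
  qed simp
qed

theorem proposition4p13:
  shows "(\<forall>U. openK2 U \<and> U \<noteq> {} \<longrightarrow>
            (\<exists>N\<ge>3. \<forall>j\<ge>N. Bphi j \<inter> U \<noteq> {}))
       \<and> (\<forall>C\<in>K2. \<forall>e>0. \<exists>D\<in>(\<Union>j\<in>{3..}. Bphi j). hausdist C D < e)"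
proof (intro conjI allI impI ballI)
  fix U assume U: "openK2 U \<and> U \<noteq> {}"
  then obtain C where C: "C \<in> U" "C \<in> K2"
    unfolding openK2_def by blast
  then obtain e where e: "e > 0" "\<forall>D\<in>K2. hausdist C D < e \<longrightarrow> D \<in> U"
    using U unfolding openK2_def by blast
  obtain N where "N \<ge> 3" "\<And>j. j \<ge> N \<Longrightarrow> \<exists>D\<in>Bphi j \<inter> K2. hausdist C D < e"
    using K2_near_Bphi[OF C(2) e(1)] by blast
  then show "\<exists>N\<ge>3. \<forall>j\<ge>N. Bphi j \<inter> U \<noteq> {}"
    using e(2) by blast
next
  fix C and e :: real assume "C \<in> K2" "e > 0"
  then obtain N where "N \<ge> 3" "\<exists>D\<in>Bphi N \<inter> K2. hausdist C D < e"
    using K2_near_Bphi by (metis order_refl)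
  then show "\<exists>D\<in>(\<Union>j\<in>{3..}. Bphi j). hausdist C D < e"
    by blast
qed

end
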